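(* Let $p$ and $q$ be distinct primes, $n=pq$, and let $e$ be a positive integer with $\gcd(e,\varphi(n))=1$ (so that there is an integer $d$ with $ed\equiv 1 \pmod{\varphi(n)}$). For a positive integer $k$, let $$T_{n,e,k}=\{x\in \mathbb{Z}_n^{\ast} : x^{e^{k}}\equiv x \pmod n \text{ and } x^{e^{m}}\not\equiv x \pmod n \text{ for every positive integer } m<k\}.$$ Then $$|T_{n,e,k}|=\sum_{d\mid k}\mu(k/d)\,\gcd(e^{d}-1,p-1)\,\gcd(e^{d}-1,q-1),$$ where the sum runs over the positive divisors $d$ of $k$ and $\mu$ is the Möbius function.
   Context: $\mathbb{Z}_n^{\ast}$ denotes a reduced residue system modulo $n$ (the residues coprime to $n$), $\varphi$ is Euler's totient function, and $\gcd(a,b)$ is the greatest common divisor (with $\gcd(0,b)=b$). *)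

theory Defs
  imports "HOL-Number_Theory.Number_Theory" "HOL-Computational_Algebra.Squarefree"
begin

definition moebius_mu :: "nat \<Rightarrow> int" where
  "moebius_mu n = (if n = 0 \<or> \<not> squarefree n then 0 else (-1) ^ card (prime_factors n))"

definition T_set :: "nat \<Rightarrow> nat \<Rightarrow> nat \<Rightarrow> nat set" where
  "T_set n e k = {x \<in> {0..<n}. coprime x n \<and> [x ^ (e ^ k) = x] (mod n) \<and>
      (\<forall>m. 0 < m \<and> m < k \<longrightarrow> \<not> [x ^ (e ^ m) = x] (mod n))}"

end

theory Submission
  imports Defs
begin

text \<open>
  Every unit x with x^(e^k) \<equiv> x (mod n) has a least period r under x \<mapsto> x^e, and r divides k;
  so the number F(k) of such units is the divisor sum of the |T_{n,e,r}|, and Moebius inversion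
  recovers |T_{n,e,k}| from the F(d). By the Chinese remainder theorem F(d) is the product of the
  corresponding counts modulo p and modulo q. Since (\<int>/p)^* is cyclic of order p - 1, the units y
  with y^N \<equiv> y, i.e. y^(N-1) \<equiv> 1 (mod p), number gcd(N - 1, p - 1).
\<close>

lemma moebius_mu_prime_mult:
  assumes p: "prime p" and t: "t > 0"
  shows "moebius_mu (p * t) = (if p dvd t then 0 else - moebius_mu t)"
proof (cases "p dvd t")
  case True
  then have "p ^ 2 dvd p * t" by (simp add: power2_eq_square)
  then have "\<not> squarefree (p * t)"
    using p by (intro not_squarefreeI) (auto simp: prime_gt_1_nat)
  with True show ?thesis by (simp add: moebius_mu_def)
next
  case False
  then have "coprime p t" using p by (simp add: prime_imp_coprime)
  then have "squarefree (p * t) \<longleftrightarrow> squarefree t"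
    using p by (auto simp: squarefree_mult_coprime squarefree_prime dest: squarefree_multD(2))
  moreover have "prime_factors (p * t) = insert p (prime_factors t)"
    using p t by (simp add: prime_factors_product prime_prime_factors)
  moreover have "p \<notin> prime_factors t" using False by auto
  ultimately show ?thesis using p t False by (simp add: moebius_mu_def)
qed

lemma sum_moebius_mu_divisors:
  assumes "m > 0"
  shows "(\<Sum>d | d dvd m. moebius_mu d) = (if m = 1 then 1 else 0)"
proof (cases "m = 1")
  case False
  then obtain p where p: "prime p" "p dvd m" using assms prime_factor_nat by blast
  define m' where "m' = m div p"
  have m: "m = p * m'" using p m'_def by simp
  have "m' > 0" using assms m by (auto intro: Nat.gr0I)
  define A where "A = {t. t dvd m' \<and> \<not> p dvd t}"
  have fin: "finite {t. t dvd m'}" using \<open>m' > 0\<close> by simp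
  have "{d. d dvd m} = A \<union> (*) p ` {t. t dvd m'}"
  proof -
    have "d dvd m \<longleftrightarrow> d \<in> A \<union> (*) p ` {t. t dvd m'}" for d
    proof (cases "p dvd d")
      case True
      then obtain t where "d = p * t" by blast
      then show ?thesis using p by (auto simp: A_def m)
    next
      case False
      then have "coprime d p" using p by (metis coprime_commute prime_imp_coprime)
      then show ?thesis using False by (auto simp: A_def m coprime_dvd_mult_right_iff)
    qed
    then show ?thesis by blast
  qed
  moreover have "A \<inter> (*) p ` {t. t dvd m'} = {}" by (auto simp: A_def)
  moreover have "inj_on ((*) p) {t. t dvd m'}" using p by (auto simp: inj_on_def)
  ultimately have "(\<Sum>d | d dvd m. moebius_mu d) =
                  sum moebius_mu A + (\<Sum>t | t dvd m'. moebius_mu (p * t))"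
    using fin by (simp add: A_def sum.union_disjoint sum.reindex)
  also have "(\<Sum>t | t dvd m'. moebius_mu (p * t)) =
             (\<Sum>t | t dvd m'. if \<not> p dvd t then - moebius_mu t else 0)"
    using p \<open>m' > 0\<close> by (intro sum.cong) (auto simp: moebius_mu_prime_mult dvd_pos_nat)
  also have "\<dots> = - sum moebius_mu A"
    using fin by (simp add: A_def sum.inter_filter[symmetric] sum_negf)
  finally show ?thesis using False by simp
qed (simp add: moebius_mu_def)

lemma sum_moebius_mu_cofactors_of_multiples:
  assumes "k > 0" and "r dvd k"
  shows "(\<Sum>d | d dvd k \<and> r dvd d. moebius_mu (k div d)) = (if r = k then 1 else 0)"
proof -
  obtain m where m: "k = r * m" using assms(2) by blast
  have "r > 0" "m > 0" using assms m by auto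
  have "(\<Sum>d | d dvd k \<and> r dvd d. moebius_mu (k div d)) = (\<Sum>s | s dvd m. moebius_mu s)"
    by (rule sum.reindex_bij_witness[of _ "\<lambda>s. k div s" "\<lambda>d. k div d"])
       (use \<open>r > 0\<close> \<open>m > 0\<close> in \<open>auto simp: m elim!: dvdE\<close>)
  also have "\<dots> = (if r = k then 1 else 0)"
    using sum_moebius_mu_divisors[OF \<open>m > 0\<close>] \<open>r > 0\<close> by (simp add: m)
  finally show ?thesis .
qed

lemma moebius_inversion:
  fixes f g :: "nat \<Rightarrow> int"
  assumes f: "\<And>d. d > 0 \<Longrightarrow> f d = (\<Sum>r | r dvd d. g r)" and "k > 0"
  shows "(\<Sum>d | d dvd k. moebius_mu (k div d) * f d) = g k"
proof -
  have fin: "finite {d. d dvd k}" using \<open>k > 0\<close> by simp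
  have "(\<Sum>d | d dvd k. moebius_mu (k div d) * f d) =
        (\<Sum>d | d dvd k. \<Sum>r | r dvd k \<and> r dvd d. moebius_mu (k div d) * g r)"
  proof (rule sum.cong)
    fix d assume d: "d \<in> {d. d dvd k}"
    then have "{r. r dvd k \<and> r dvd d} = {r. r dvd d}" by (auto intro: dvd_trans)
    with d \<open>k > 0\<close> show "moebius_mu (k div d) * f d =
        (\<Sum>r | r dvd k \<and> r dvd d. moebius_mu (k div d) * g r)"
      by (simp add: f dvd_pos_nat sum_distrib_left)
  qed simp
  also have "\<dots> = (\<Sum>r | r dvd k. (\<Sum>d | d dvd k \<and> r dvd d. moebius_mu (k div d)) * g r)"
    using sum.swap_restrict[OF fin fin, of "\<lambda>d r. moebius_mu (k div d) * g r" "\<lambda>d r. r dvd d"]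
    by (simp add: sum_distrib_right Collect_conj_eq)
  also have "\<dots> = (\<Sum>r | r dvd k. if r = k then g r else 0)"
    by (rule sum.cong) (simp_all add: sum_moebius_mu_cofactors_of_multiples \<open>k > 0\<close>)
  also have "\<dots> = g k"
    using fin by (simp add: sum.delta)
  finally show ?thesis .
qed

definition pow_fixed_units :: "nat \<Rightarrow> nat \<Rightarrow> nat set" where
  "pow_fixed_units n N = {x \<in> totatives n. [x ^ N = x] (mod n)}"

lemma card_pow_fixed_units_prime:
  assumes p: "prime p" and "N > 0"
  shows "card (pow_fixed_units p N) = gcd (N - 1) (p - 1)"
proof -
  define G where "G = gcd (N - 1) (p - 1)"
  have "p > 1" using p prime_gt_1_nat by blast
  have fixed_iff_ord_dvd: "[x ^ N = x] (mod p) \<longleftrightarrow> ord p x dvd G" if "x \<in> totatives p" for x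
  proof -
    have "coprime x p" using that by (simp add: totatives_def)
    have "x ^ N = x ^ (N - 1) * x" using \<open>N > 0\<close> by (simp add: power_eq_if)
    then have "[x ^ N = x] (mod p) \<longleftrightarrow> [x ^ (N - 1) * x = 1 * x] (mod p)" by simp
    also have "\<dots> \<longleftrightarrow> ord p x dvd N - 1"
      using \<open>coprime x p\<close> by (simp only: cong_mult_rcancel_nat ord_divides)
    also have "\<dots> \<longleftrightarrow> ord p x dvd G"
      using order_divides_totient[of p x] \<open>coprime x p\<close> p
      by (simp add: G_def totient_prime coprime_commute)
    finally show ?thesis .
  qed
  have "pow_fixed_units p N = (\<Union>d\<in>{d. d dvd G}. {x \<in> totatives p. ord p x = d})"
    using fixed_iff_ord_dvd by (auto simp: pow_fixed_units_def)
  also have "card \<dots> = (\<Sum>d | d dvd G. card {x \<in> totatives p. ord p x = d})"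
    using \<open>p > 1\<close> by (intro card_UN_disjoint) (auto simp: G_def)
  also have "\<dots> = (\<Sum>d | d dvd G. totient d)"
    using prime_card_elements_with_ord_eq_totient[OF \<open>p > 1\<close> p]
    by (intro sum.cong) (auto simp: G_def intro: dvd_trans)
  also have "\<dots> = G" by (rule totient_divisor_sum)
  finally show ?thesis by (simp add: G_def)
qed

lemma cong_mult_modulus_iff_coprime:
  fixes a b :: nat
  assumes "coprime m1 m2"
  shows "[a = b] (mod m1 * m2) \<longleftrightarrow> [a = b] (mod m1) \<and> [a = b] (mod m2)"
  using assms by (metis coprime_cong_mult_nat cong_modulus_mult_nat mult.commute)

lemma card_pow_fixed_units_mult_coprime:
  assumes "m1 > 1" "m2 > 1" "coprime m1 m2"
  shows "card (pow_fixed_units (m1 * m2) N) =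
           card (pow_fixed_units m1 N) * card (pow_fixed_units m2 N)"
proof -
  have reduce: "[(x mod m) ^ N = x] (mod m) \<longleftrightarrow> [x ^ N = x] (mod m)" for x m :: nat
    by (simp add: cong_def power_mod)
  let ?Q = "\<lambda>(y1, y2). [y1 ^ N = y1] (mod m1) \<and> [y2 ^ N = y2] (mod m2)"
  have "bij_betw (\<lambda>x. (x mod m1, x mod m2)) (pow_fixed_units (m1 * m2) N)
          {y \<in> totatives m1 \<times> totatives m2. ?Q y}"
    unfolding pow_fixed_units_def
    by (rule bij_betw_Collect[OF bij_betw_totatives[OF assms]])
       (simp add: cong_mult_modulus_iff_coprime[OF assms(3)] reduce)
  also have "{y \<in> totatives m1 \<times> totatives m2. ?Q y} = pow_fixed_units m1 N \<times> pow_fixed_units m2 N"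
    by (auto simp: pow_fixed_units_def)
  finally show ?thesis by (simp add: bij_betw_same_card card_cartesian_product)
qed

lemma cong_pow_pow_add:
  fixes x :: "'a :: unique_euclidean_semiring"
  assumes "[x ^ (e ^ a) = x] (mod n)" and "[x ^ (e ^ b) = x] (mod n)"
  shows "[x ^ (e ^ (a + b)) = x] (mod n)"
proof -
  have "x ^ (e ^ (a + b)) = (x ^ (e ^ a)) ^ (e ^ b)" by (simp add: power_add power_mult)
  also have "[\<dots> = x ^ (e ^ b)] (mod n)" using assms(1) by (rule cong_pow)
  finally show ?thesis using assms(2) by (rule cong_trans)
qed

lemma cong_pow_pow_diff:
  fixes x :: "'a :: unique_euclidean_semiring"
  assumes "[x ^ (e ^ a) = x] (mod n)" and "[x ^ (e ^ b) = x] (mod n)" and "a \<le> b"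
  shows "[x ^ (e ^ (b - a)) = x] (mod n)"
proof -
  have "[x ^ (e ^ (b - a)) = (x ^ (e ^ a)) ^ (e ^ (b - a))] (mod n)"
    using assms(1) by (rule cong_pow[THEN cong_sym])
  also have "(x ^ (e ^ a)) ^ (e ^ (b - a)) = x ^ (e ^ b)"
    using assms(3) by (simp flip: power_mult power_add)
  finally show ?thesis using assms(2) by (rule cong_trans)
qed

lemma cong_pow_pow_mult:
  fixes x :: "'a :: unique_euclidean_semiring"
  assumes "[x ^ (e ^ r) = x] (mod n)"
  shows "[x ^ (e ^ (r * j)) = x] (mod n)"
proof (induction j)
  case (Suc j)
  then show ?case using cong_pow_pow_add[OF Suc assms] by (simp add: add.commute)
qed simp

lemma least_positive_dvd_if_diff_closed:
  fixes S :: "nat set"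
  assumes diff_closed: "\<And>a b. a \<in> S \<Longrightarrow> b \<in> S \<Longrightarrow> a \<le> b \<Longrightarrow> b - a \<in> S"
    and "r \<in> S" "r > 0" and least: "\<And>m. m \<in> S \<Longrightarrow> m > 0 \<Longrightarrow> r \<le> m"
  shows "m \<in> S \<Longrightarrow> r dvd m"
proof (induction m rule: less_induct)
  case (less m)
  show ?case
  proof (cases "m = 0")
    case False
    then have "r \<le> m" using least less.prems by simp
    then have "r dvd m - r" using less diff_closed \<open>r \<in> S\<close> \<open>r > 0\<close> by simp
    with \<open>r \<le> m\<close> show ?thesis by (simp add: dvd_minus_self)
  qed simp
qed

lemma T_set_period_dvd:
  assumes "x \<in> T_set n e r" and "r > 0" and "[x ^ (e ^ m) = x] (mod n)"
  shows "r dvd m"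
  using least_positive_dvd_if_diff_closed[of "{m. [x ^ (e ^ m) = x] (mod n)}" r m] assms
  by (auto simp: T_set_def cong_pow_pow_diff not_less[symmetric])

lemma totatives_eq_coprime_lessThan:
  assumes "n > 1"
  shows "totatives n = {x \<in> {0..<n}. coprime x n}"
  using assms by (auto simp: in_totatives_iff totatives_less intro!: Nat.gr0I)

lemma pow_fixed_units_pow_eq_UN_T_set:
  assumes "n > 1" and "d > 0"
  shows "pow_fixed_units n (e ^ d) = (\<Union>r\<in>{r. r dvd d}. T_set n e r)"
proof (intro equalityI subsetI)
  fix x assume x: "x \<in> pow_fixed_units n (e ^ d)"
  define r where "r = (LEAST m. 0 < m \<and> [x ^ (e ^ m) = x] (mod n))"
  have r: "0 < r \<and> [x ^ (e ^ r) = x] (mod n)"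
    unfolding r_def by (rule LeastI[of _ d]) (use x \<open>d > 0\<close> in \<open>simp add: pow_fixed_units_def\<close>)
  have "x \<in> T_set n e r"
    using x r not_less_Least[of _ "\<lambda>m. 0 < m \<and> [x ^ (e ^ m) = x] (mod n)"]
    by (auto simp: T_set_def pow_fixed_units_def totatives_eq_coprime_lessThan[OF \<open>n > 1\<close>] r_def)
  moreover have "r dvd d"
    using T_set_period_dvd[OF \<open>x \<in> T_set n e r\<close>] r x by (simp add: pow_fixed_units_def)
  ultimately show "x \<in> (\<Union>r\<in>{r. r dvd d}. T_set n e r)" by blast
next
  fix x assume "x \<in> (\<Union>r\<in>{r. r dvd d}. T_set n e r)"
  then obtain r j where "x \<in> T_set n e r" "d = r * j" by blast
  then show "x \<in> pow_fixed_units n (e ^ d)"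
    using cong_pow_pow_mult[of x e r n j]
    by (auto simp: T_set_def pow_fixed_units_def totatives_eq_coprime_lessThan[OF \<open>n > 1\<close>])
qed

lemma card_pow_fixed_units_pow:
  assumes "n > 1" and "d > 0"
  shows "card (pow_fixed_units n (e ^ d)) = (\<Sum>r | r dvd d. card (T_set n e r))"
  unfolding pow_fixed_units_pow_eq_UN_T_set[OF assms]
proof (rule card_UN_disjoint)
  show "finite {r. r dvd d}" using \<open>d > 0\<close> by simp
  show "\<forall>r\<in>{r. r dvd d}. finite (T_set n e r)" by (simp add: T_set_def)
  show "\<forall>r\<in>{r. r dvd d}. \<forall>s\<in>{r. r dvd d}. r \<noteq> s \<longrightarrow> T_set n e r \<inter> T_set n e s = {}"
    using \<open>d > 0\<close> by (auto simp: T_set_def) (metis dvd_pos_nat linorder_neqE_nat)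
qed

theorem theorem1:
  fixes p q n e k :: nat
  assumes "prime p" and "prime q" and "p \<noteq> q" and "n = p * q"
    and "e > 0" and "coprime e (totient n)" and "k > 0"
  shows "int (card (T_set n e k)) =
    (\<Sum>d | d dvd k. moebius_mu (k div d) * int (gcd (e ^ d - 1) (p - 1)) * int (gcd (e ^ d - 1) (q - 1)))"
proof -
  have "p > 1" "q > 1" "coprime p q"
    using assms(1-3) prime_gt_1_nat primes_coprime by blast+
  then have "n > 1" using assms(4) by (simp add: one_less_mult)
  define f where "f d = int (card (pow_fixed_units n (e ^ d)))" for d
  have f_divisor_sum: "f d = (\<Sum>r | r dvd d. int (card (T_set n e r)))" if "d > 0" for d
    using card_pow_fixed_units_pow[OF \<open>n > 1\<close> that] by (simp add: f_def)
  have f_gcd: "f d = int (gcd (e ^ d - 1) (p - 1)) * int (gcd (e ^ d - 1) (q - 1))" for d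
    using \<open>e > 0\<close>
    by (simp add: f_def assms(4) card_pow_fixed_units_mult_coprime[OF \<open>p > 1\<close> \<open>q > 1\<close> \<open>coprime p q\<close>]
        card_pow_fixed_units_prime[OF assms(1)] card_pow_fixed_units_prime[OF assms(2)])
  have "int (card (T_set n e k)) = (\<Sum>d | d dvd k. moebius_mu (k div d) * f d)"
    by (rule moebius_inversion[OF f_divisor_sum \<open>k > 0\<close>, symmetric])
  then show ?thesis by (simp add: f_gcd mult.assoc)
qed

end
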